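(* Let $n\ge 1$ and $1\le p\le n$. Then the number of $\alpha\in\mathcal{OCT}_n$ with $h(\alpha)=p$ is $$F(n;p)=(n-p+1)\binom{n-1}{p-1}.$$
   Context: $X_n=\{1,2,\dots,n\}$ with its usual order; maps are written on the right ($x\alpha$). A map $\alpha:X_n\to X_n$ is order-preserving if $x\le y$ implies $x\alpha\le y\alpha$, and a contraction if $|x\alpha-y\alpha|\le|x-y|$ for all $x,y$. $\mathcal{OCT}_n$ is the set of all order-preserving contractions $X_n\to X_n$ (defined on all of $X_n$). Height $h(\alpha)=|\mathrm{Im}\,\alpha|$. *)

theory Defs
  imports Main "HOL-Library.FuncSet"
begin

text \<open>Full transformations of X_n = {1..n}, represented as extensional functions
  (value undefined outside {1..n}).\<close>

definition order_preserving :: "nat \<Rightarrow> (nat \<Rightarrow> nat) \<Rightarrow> bool" where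
  "order_preserving n f \<longleftrightarrow> (\<forall>x\<in>{1..n}. \<forall>y\<in>{1..n}. x \<le> y \<longrightarrow> f x \<le> f y)"

definition contraction :: "nat \<Rightarrow> (nat \<Rightarrow> nat) \<Rightarrow> bool" where
  "contraction n f \<longleftrightarrow> (\<forall>x\<in>{1..n}. \<forall>y\<in>{1..n}.
      \<bar>int (f x) - int (f y)\<bar> \<le> \<bar>int x - int y\<bar>)"

definition OCT :: "nat \<Rightarrow> (nat \<Rightarrow> nat) set" where
  "OCT n = {f \<in> {1..n} \<rightarrow>\<^sub>E {1..n}. order_preserving n f \<and> contraction n f}"

definition height :: "nat \<Rightarrow> (nat \<Rightarrow> nat) \<Rightarrow> nat" where
  "height n f = card (f ` {1..n})"

end

theory Submission
  imports Defs
begin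

text \<open>An order-preserving contraction of \<open>{1..n}\<close> moves by 0 or 1 between consecutive points,
  and conversely every such map is an order-preserving contraction. Such a map is therefore
  determined by its value at 1 and its set \<open>S \<subseteq> {1..<n}\<close> of jump positions, the image being
  the interval \<open>{f 1 .. f 1 + |S|}\<close>. Height \<open>p\<close> means \<open>|S| = p - 1\<close>, and \<open>f 1\<close> may be any of
  the \<open>n - p + 1\<close> values for which this interval stays inside \<open>{1..n}\<close>.\<close>

definition unit_steps :: "nat \<Rightarrow> (nat \<Rightarrow> nat) \<Rightarrow> bool" where
  "unit_steps n f \<longleftrightarrow> (\<forall>i\<in>{1..<n}. f (Suc i) = f i \<or> f (Suc i) = Suc (f i))"

definition jumps :: "nat \<Rightarrow> (nat \<Rightarrow> nat) \<Rightarrow> nat set" where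
  "jumps m f = {i\<in>{1..<m}. f i \<noteq> f (Suc i)}"

lemma finite_jumps [simp]: "finite (jumps m f)"
  by (simp add: jumps_def)

lemma jumps_Suc:
  "1 \<le> m \<Longrightarrow> jumps (Suc m) f = (if f m = f (Suc m) then jumps m f else insert m (jumps m f))"
  by (auto simp: jumps_def less_Suc_eq)

lemma jumps_prefix: "m \<le> n \<Longrightarrow> jumps m f = jumps n f \<inter> {..<m}"
  by (auto simp: jumps_def)

lemma unit_steps_value:
  assumes "unit_steps n f" "1 \<le> m" "m \<le> n"
  shows "f m = f 1 + card (jumps m f)"
  using assms(2,3)
proof (induction m rule: nat_induct_at_least)
  case base
  then show ?case by (simp add: jumps_def)
next
  case (Suc m)
  then have "m \<in> {1..<n}"
    by simp
  then have "f (Suc m) = f m \<or> f (Suc m) = Suc (f m)"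
    using assms(1) unfolding unit_steps_def by blast
  moreover have "m \<notin> jumps m f"
    by (simp add: jumps_def)
  ultimately show ?case
    using Suc by (auto simp: jumps_Suc)
qed

lemma unit_steps_image:
  assumes "unit_steps n f" "1 \<le> m" "m \<le> n"
  shows "f ` {1..m} = {f 1..f m}"
  using assms(2,3)
proof (induction m rule: nat_induct_at_least)
  case (Suc m)
  have "f (Suc m) = f m \<or> f (Suc m) = Suc (f m)"
    using assms(1) Suc by (auto simp: unit_steps_def)
  moreover have "f ` {1..Suc m} = insert (f (Suc m)) (f ` {1..m})"
    using Suc by (auto simp: atLeastAtMostSuc_conv)
  moreover have "f 1 \<le> f m"
    using unit_steps_value[OF assms(1), of m] Suc by simp
  ultimately show ?case
    using Suc by (auto simp: atLeastAtMostSuc_conv)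
qed simp

lemma card_image_unit_steps:
  assumes "unit_steps n f" "1 \<le> n"
  shows "card (f ` {1..n}) = Suc (card (jumps n f))"
  using unit_steps_image[OF assms(1) assms(2) order_refl] unit_steps_value[OF assms(1) assms(2) order_refl]
  by simp

lemma unit_steps_increment_bounds:
  assumes "unit_steps n f" "1 \<le> x" "x \<le> y" "y \<le> n"
  shows "f x \<le> f y" and "f y \<le> f x + (y - x)"
proof -
  have sub: "jumps x f \<subseteq> jumps y f"
    using assms by (auto simp: jumps_def)
  have "card (jumps y f) - card (jumps x f) = card (jumps y f - jumps x f)"
    using sub by (simp add: card_Diff_subset)
  also have "\<dots> \<le> card {x..<y}"
    by (rule card_mono) (auto simp: jumps_def)
  finally have "card (jumps y f) \<le> card (jumps x f) + (y - x)"
    by simp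
  moreover have "card (jumps x f) \<le> card (jumps y f)"
    using sub by (simp add: card_mono)
  ultimately show "f x \<le> f y" "f y \<le> f x + (y - x)"
    using unit_steps_value[OF assms(1), of x] unit_steps_value[OF assms(1), of y] assms by auto
qed

lemma OCT_iff_unit_steps: "f \<in> OCT n \<longleftrightarrow> f \<in> {1..n} \<rightarrow>\<^sub>E {1..n} \<and> unit_steps n f"
proof
  assume f: "f \<in> OCT n"
  have "f (Suc i) = f i \<or> f (Suc i) = Suc (f i)" if "i \<in> {1..<n}" for i
  proof -
    have i: "i \<in> {1..n}" "Suc i \<in> {1..n}"
      using that by auto
    have "order_preserving n f" "contraction n f"
      using f by (simp_all add: OCT_def)
    then have "f i \<le> f (Suc i)" "\<bar>int (f i) - int (f (Suc i))\<bar> \<le> \<bar>int i - int (Suc i)\<bar>"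
      unfolding order_preserving_def contraction_def using i le_SucI by blast+
    then show ?thesis
      by linarith
  qed
  then show "f \<in> {1..n} \<rightarrow>\<^sub>E {1..n} \<and> unit_steps n f"
    using f by (simp add: OCT_def unit_steps_def)
next
  assume f: "f \<in> {1..n} \<rightarrow>\<^sub>E {1..n} \<and> unit_steps n f"
  then have "order_preserving n f"
    using unit_steps_increment_bounds(1) by (fastforce simp: order_preserving_def)
  moreover have "contraction n f"
    unfolding contraction_def
  proof (intro ballI)
    fix x y assume "x \<in> {1..n}" "y \<in> {1..n}"
    then show "\<bar>int (f x) - int (f y)\<bar> \<le> \<bar>int x - int y\<bar>"
      using unit_steps_increment_bounds[of n f x y] unit_steps_increment_bounds[of n f y x] f
      by (cases "x \<le> y") auto
  qed
  ultimately show "f \<in> OCT n"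
    using f by (simp add: OCT_def)
qed

lemma OCT_eqI:
  assumes "f \<in> OCT n" "g \<in> OCT n" "f 1 = g 1" "jumps n f = jumps n g"
  shows "f = g"
proof (rule extensionalityI[of _ "{1..n}"])
  show "f \<in> extensional {1..n}" "g \<in> extensional {1..n}"
    using assms(1,2) by (auto simp: OCT_iff_unit_steps PiE_iff)
next
  fix x assume "x \<in> {1..n}"
  then show "f x = g x"
    using assms unit_steps_value[of n f x] unit_steps_value[of n g x] jumps_prefix[of x n]
    by (auto simp: OCT_iff_unit_steps)
qed

lemma height_OCT: "1 \<le> n \<Longrightarrow> f \<in> OCT n \<Longrightarrow> height n f = Suc (card (jumps n f))"
  using card_image_unit_steps by (auto simp: height_def OCT_iff_unit_steps)

text \<open>The inverse of \<open>f \<mapsto> (f 1, jumps n f)\<close>: start at \<open>a\<close> and count the jumps passed so far.\<close>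

definition from_jumps :: "nat \<Rightarrow> nat \<Rightarrow> nat set \<Rightarrow> nat \<Rightarrow> nat" where
  "from_jumps n a S = restrict (\<lambda>x. a + card (S \<inter> {..<x})) {1..n}"

lemma card_Int_lessThan_Suc:
  "finite S \<Longrightarrow> card (S \<inter> {..<Suc i}) = card (S \<inter> {..<i}) + (if i \<in> S then 1 else 0)"
  by (simp add: lessThan_Suc)

lemma OCT_from_jumps:
  assumes S: "S \<subseteq> {1..<n}" and a: "1 \<le> a" "a + card S \<le> n"
  shows "from_jumps n a S \<in> OCT n" and "from_jumps n a S 1 = a"
    and "jumps n (from_jumps n a S) = S"
proof -
  let ?g = "from_jumps n a S"
  have fin: "finite S"
    using S finite_subset by blast
  have step: "?g (Suc i) = ?g i + (if i \<in> S then 1 else 0)" if "i \<in> {1..<n}" for i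
    using that fin by (simp add: from_jumps_def card_Int_lessThan_Suc)
  have "a + card (S \<inter> {..<x}) \<le> n" for x
    using a card_mono[OF fin, of "S \<inter> {..<x}"] by auto
  then have "?g \<in> {1..n} \<rightarrow>\<^sub>E {1..n}"
    using a by (auto simp: from_jumps_def)
  moreover have "unit_steps n ?g"
    using step by (simp add: unit_steps_def)
  ultimately show "?g \<in> OCT n"
    by (simp add: OCT_iff_unit_steps)
  show "?g 1 = a"
    using S a by (auto simp: from_jumps_def)
  have "?g i \<noteq> ?g (Suc i) \<longleftrightarrow> i \<in> S" if "i \<in> {1..<n}" for i
    using step[OF that] by simp
  then have "jumps n ?g = {i\<in>{1..<n}. i \<in> S}"
    unfolding jumps_def by blast
  then show "jumps n ?g = S"
    using S by blast
qed

lemma bij_betw_OCT_height: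
  assumes "1 \<le> n" "1 \<le> p"
  shows "bij_betw (\<lambda>f. (f 1, jumps n f)) {f \<in> OCT n. height n f = p}
           ({1..n - p + 1} \<times> {S. S \<subseteq> {1..<n} \<and> card S = p - 1})"
proof (rule bij_betw_imageI)
  show "inj_on (\<lambda>f. (f 1, jumps n f)) {f \<in> OCT n. height n f = p}"
    by (rule inj_onI) (auto intro: OCT_eqI)
next
  have start_bounds: "1 \<le> f 1" "f 1 + card (jumps n f) \<le> n" if "f \<in> OCT n" for f
  proof -
    have "f 1 \<in> {1..n}" "f n \<in> {1..n}"
      using that assms by (auto simp: OCT_iff_unit_steps)
    then show "1 \<le> f 1" "f 1 + card (jumps n f) \<le> n"
      using that assms unit_steps_value[of n f n] by (auto simp: OCT_iff_unit_steps)
  qed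
  show "(\<lambda>f. (f 1, jumps n f)) ` {f \<in> OCT n. height n f = p}
          = {1..n - p + 1} \<times> {S. S \<subseteq> {1..<n} \<and> card S = p - 1}"
  proof (intro equalityI subsetI)
    fix y assume "y \<in> (\<lambda>f. (f 1, jumps n f)) ` {f \<in> OCT n. height n f = p}"
    then obtain f where f: "f \<in> OCT n" "height n f = p" and y: "y = (f 1, jumps n f)"
      by blast
    have "card (jumps n f) = p - 1"
      using height_OCT[OF assms(1) f(1)] f(2) by simp
    moreover have "jumps n f \<subseteq> {1..<n}"
      by (auto simp: jumps_def)
    moreover have "f 1 \<in> {1..n - p + 1}"
      using start_bounds[OF f(1)] \<open>card (jumps n f) = p - 1\<close> assms(2) by simp
    ultimately show "y \<in> {1..n - p + 1} \<times> {S. S \<subseteq> {1..<n} \<and> card S = p - 1}"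
      using y by simp
  next
    fix y assume y_in: "y \<in> {1..n - p + 1} \<times> {S. S \<subseteq> {1..<n} \<and> card S = p - 1}"
    obtain a S where y: "y = (a, S)"
      by (cases y)
    with y_in have a: "1 \<le> a" "a \<le> n - p + 1" and S: "S \<subseteq> {1..<n}" "card S = p - 1"
      by auto
    have "card S \<le> n - 1"
      using card_mono[OF finite_atLeastLessThan S(1)] by simp
    then have "a + card S \<le> n"
      using a S(2) assms by linarith
    note g = OCT_from_jumps[OF S(1) a(1) this]
    have "height n (from_jumps n a S) = p"
      using height_OCT[OF assms(1) g(1)] g(3) S(2) assms(2) by simp
    then show "y \<in> (\<lambda>f. (f 1, jumps n f)) ` {f \<in> OCT n. height n f = p}"
      using g y by (auto intro!: image_eqI[of _ _ "from_jumps n a S"])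
  qed
qed

theorem corollary2p7:
  fixes n p :: nat
  assumes "1 \<le> n" and "1 \<le> p" and "p \<le> n"
  shows "card {f \<in> OCT n. height n f = p} = (n - p + 1) * ((n - 1) choose (p - 1))"
proof -
  have "card {f \<in> OCT n. height n f = p}
          = card ({1..n - p + 1} \<times> {S. S \<subseteq> {1..<n} \<and> card S = p - 1})"
    using bij_betw_OCT_height[OF assms(1,2)] by (rule bij_betw_same_card)
  also have "\<dots> = (n - p + 1) * ((n - 1) choose (p - 1))"
    by (simp add: card_cartesian_product n_subsets)
  finally show ?thesis .
qed

end
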